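(* Let $\mathcal G$ be a shortest-path game in which $\mathrm{Val}^{\mathrm d}(v)\neq+\infty$ and $\overline{\mathrm{Val}}^{\mathrm m}(v)\neq+\infty$ for all vertices $v$, and let $\rho$ be a memoryless strategy of Min such that $\mathbb P^{\rho,\tau}_v(\Diamond T)=1$ for every vertex $v$ and every memoryless strategy $\tau$ of Max. Let $\widetilde{\mathcal G}$ and $\sigma_1$ be as defined below. Then $\sigma_1$ is an NC-strategy: every cycle of $\widetilde{\mathcal G}$ conforming to $\sigma_1$ has negative total weight.
   Context: A shortest-path game is $\mathcal G=(V_{\mathrm{Max}},V_{\mathrm{Min}},T,E,w)$ with finite $V=V_{\mathrm{Max}}\uplus V_{\mathrm{Min}}\uplus T$, edges $E\subseteq (V\setminus T)\times V$ with every non-target vertex having a successor, and integer weights $w\colon E\to\mathbb Z$. Plays from $v$ are finite paths ending at their first visit to $T$ (total payoff $\mathrm{TP}$ = sum of weights) or infinite paths avoiding $T$ ($\mathrm{TP}=+\infty$). Strategies of Min (resp. Max) map finite paths ending in $V_{\mathrm{Min}}$ (resp. $V_{\mathrm{Max}}$) to distributions on successors of the last vertex; deterministic = always Dirac, memoryless = depends only on the last vertex. $\mathrm{Val}^{\mathrm d}(v)=\inf_\sigma\sup_\tau\mathrm{TP}(\text{unique play from } v \text{ conforming to }\sigma,\tau)$ over deterministic strategies. For memoryless $\rho,\tau$, $\mathbb P^{\rho,\tau}_v,\mathbb E^{\rho,\tau}_v$ refer to the induced Markov chain; $\mathrm{Val}^{\mathrm m,\rho}(v)=\sup_\tau\mathbb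 E^{\rho,\tau}_v(\mathrm{TP})$ over memoryless $\tau$, $\overline{\mathrm{Val}}^{\mathrm m}(v)=\inf_\rho\mathrm{Val}^{\mathrm m,\rho}(v)$. For $v\in V_{\mathrm{Min}}$ let $\widetilde E(v)=\arg\min_{v'\in\mathrm{supp}(\rho(v))}\big[w(v,v')+\mathrm{Val}^{\mathrm m,\rho}(v')\big]$, and let $\widetilde{\mathcal G}$ be obtained from $\mathcal G$ by removing every edge $(v,v')$ with $v\in V_{\mathrm{Min}}$, $v'\notin\widetilde E(v)$. Let $d(v)$ be the attractor distance to $T$ in the graph where Min vertices $v$ only use edges to $\mathrm{supp}(\rho(v))$: $d(v)=0$ for $v\in T$, and $d$ is the least function with $d(v)=1+\min_{v'\in\mathrm{supp}(\rho(v))}d(v')$ for $v\in V_{\mathrm{Min}}$ and $d(v)=1+\max_{v'\in E(v)}d(v')$ for $v\in V_{\mathrm{Max}}$. Let $\sigma_1$ be the memoryless deterministic Min strategy with $\sigma_1(v)\in\arg\min_{v'\in\widetilde E(v)}d(v')$. A cycle conforms to $\sigma_1$ if every Min vertex $u$ on it is followed by $\sigma_1(u)$. *)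

theory Defs
  imports "HOL-Probability.Probability"
begin

text \<open>Weights w are given as an integer function on pairs (only relevant on E).\<close>

definition spg :: "'v set \<Rightarrow> 'v set \<Rightarrow> 'v set \<Rightarrow> ('v \<times> 'v) set \<Rightarrow> bool" where
  "spg VMax VMin T E \<longleftrightarrow> finite (VMax \<union> VMin \<union> T) \<and>
     VMax \<inter> VMin = {} \<and> VMax \<inter> T = {} \<and> VMin \<inter> T = {} \<and>
     E \<subseteq> (VMax \<union> VMin) \<times> (VMax \<union> VMin \<union> T) \<and>
     (\<forall>v \<in> VMax \<union> VMin. \<exists>v'. (v, v') \<in> E)"

fun tp_fin :: "'v set \<Rightarrow> ('v \<Rightarrow> 'v \<Rightarrow> int) \<Rightarrow> 'v list \<Rightarrow> int" where
  "tp_fin T w (u # u' # us) = (if u \<in> T then 0 else w u u' + tp_fin T w (u' # us))"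
| "tp_fin T w _ = 0"

definition det_strat :: "('v \<times> 'v) set \<Rightarrow> 'v set \<Rightarrow> ('v list \<Rightarrow> 'v) \<Rightarrow> bool" where
  "det_strat E P s \<longleftrightarrow> (\<forall>h. h \<noteq> [] \<and> last h \<in> P \<longrightarrow> (last h, s h) \<in> E)"

primrec det_prefix :: "'v set \<Rightarrow> 'v set \<Rightarrow> ('v list \<Rightarrow> 'v) \<Rightarrow> ('v list \<Rightarrow> 'v) \<Rightarrow> 'v \<Rightarrow> nat \<Rightarrow> 'v list" where
  "det_prefix VMin T \<sigma> \<tau> v 0 = [v]"
| "det_prefix VMin T \<sigma> \<tau> v (Suc n) =
     (let h = det_prefix VMin T \<sigma> \<tau> v n in
      if last h \<in> T then h else h @ [if last h \<in> VMin then \<sigma> h else \<tau> h])"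

definition det_TP :: "'v set \<Rightarrow> 'v set \<Rightarrow> ('v \<Rightarrow> 'v \<Rightarrow> int) \<Rightarrow> ('v list \<Rightarrow> 'v) \<Rightarrow> ('v list \<Rightarrow> 'v) \<Rightarrow> 'v \<Rightarrow> ereal" where
  "det_TP VMin T w \<sigma> \<tau> v =
     (if \<exists>n. last (det_prefix VMin T \<sigma> \<tau> v n) \<in> T
      then ereal (real_of_int (tp_fin T w (det_prefix VMin T \<sigma> \<tau> v
                 (LEAST n. last (det_prefix VMin T \<sigma> \<tau> v n) \<in> T))))
      else \<infinity>)"

definition val_d :: "'v set \<Rightarrow> 'v set \<Rightarrow> 'v set \<Rightarrow> ('v \<times> 'v) set \<Rightarrow> ('v \<Rightarrow> 'v \<Rightarrow> int) \<Rightarrow> 'v \<Rightarrow> ereal" where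
  "val_d VMax VMin T E w v =
     (INF \<sigma> \<in> {\<sigma>. det_strat E VMin \<sigma>}. SUP \<tau> \<in> {\<tau>. det_strat E VMax \<tau>}. det_TP VMin T w \<sigma> \<tau> v)"

definition ml_strat :: "('v \<times> 'v) set \<Rightarrow> 'v set \<Rightarrow> ('v \<Rightarrow> 'v pmf) \<Rightarrow> bool" where
  "ml_strat E P s \<longleftrightarrow> (\<forall>v \<in> P. set_pmf (s v) \<subseteq> E `` {v})"

definition mc_step :: "'v set \<Rightarrow> 'v set \<Rightarrow> ('v \<Rightarrow> 'v pmf) \<Rightarrow> ('v \<Rightarrow> 'v pmf) \<Rightarrow> 'v \<Rightarrow> 'v pmf" where
  "mc_step VMax VMin \<rho> \<tau> v =
     (if v \<in> VMin then \<rho> v else if v \<in> VMax then \<tau> v else return_pmf v)"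

primrec mc_paths :: "'v set \<Rightarrow> 'v set \<Rightarrow> ('v \<Rightarrow> 'v pmf) \<Rightarrow> ('v \<Rightarrow> 'v pmf) \<Rightarrow> 'v \<Rightarrow> nat \<Rightarrow> 'v list pmf" where
  "mc_paths VMax VMin \<rho> \<tau> v 0 = return_pmf [v]"
| "mc_paths VMax VMin \<rho> \<tau> v (Suc n) =
     bind_pmf (mc_paths VMax VMin \<rho> \<tau> v n)
       (\<lambda>h. map_pmf (\<lambda>u. h @ [u]) (mc_step VMax VMin \<rho> \<tau> (last h)))"

text \<open>P(eventually T) = limit (supremum) of the probabilities of reaching T within n steps.\<close>

definition reach_prob :: "'v set \<Rightarrow> 'v set \<Rightarrow> 'v set \<Rightarrow> ('v \<Rightarrow> 'v pmf) \<Rightarrow> ('v \<Rightarrow> 'v pmf) \<Rightarrow> 'v \<Rightarrow> real" where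
  "reach_prob VMax VMin T \<rho> \<tau> v =
     (SUP n. measure_pmf.prob (mc_paths VMax VMin \<rho> \<tau> v n) {h. \<exists>u \<in> set h. u \<in> T})"

text \<open>Expected total payoff: +\<infinity> if T is missed with positive probability (then TP = +\<infinity>
  on a set of positive measure), otherwise the limit of the expected payoffs of the
  n-step truncations (dominated convergence).\<close>

definition ETP :: "'v set \<Rightarrow> 'v set \<Rightarrow> 'v set \<Rightarrow> ('v \<Rightarrow> 'v \<Rightarrow> int) \<Rightarrow> ('v \<Rightarrow> 'v pmf) \<Rightarrow> ('v \<Rightarrow> 'v pmf) \<Rightarrow> 'v \<Rightarrow> ereal" where
  "ETP VMax VMin T w \<rho> \<tau> v =
     (if reach_prob VMax VMin T \<rho> \<tau> v = 1
      then ereal (lim (\<lambda>n. measure_pmf.expectation (mc_paths VMax VMin \<rho> \<tau> v n)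
                              (\<lambda>h. real_of_int (tp_fin T w h))))
      else \<infinity>)"

definition val_m_rho :: "'v set \<Rightarrow> 'v set \<Rightarrow> 'v set \<Rightarrow> ('v \<times> 'v) set \<Rightarrow> ('v \<Rightarrow> 'v \<Rightarrow> int) \<Rightarrow> ('v \<Rightarrow> 'v pmf) \<Rightarrow> 'v \<Rightarrow> ereal" where
  "val_m_rho VMax VMin T E w \<rho> v = (SUP \<tau> \<in> {\<tau>. ml_strat E VMax \<tau>}. ETP VMax VMin T w \<rho> \<tau> v)"

definition val_m_bar :: "'v set \<Rightarrow> 'v set \<Rightarrow> 'v set \<Rightarrow> ('v \<times> 'v) set \<Rightarrow> ('v \<Rightarrow> 'v \<Rightarrow> int) \<Rightarrow> 'v \<Rightarrow> ereal" where
  "val_m_bar VMax VMin T E w v = (INF \<rho> \<in> {\<rho>. ml_strat E VMin \<rho>}. val_m_rho VMax VMin T E w \<rho> v)"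

definition Etil :: "'v set \<Rightarrow> 'v set \<Rightarrow> 'v set \<Rightarrow> ('v \<times> 'v) set \<Rightarrow> ('v \<Rightarrow> 'v \<Rightarrow> int) \<Rightarrow> ('v \<Rightarrow> 'v pmf) \<Rightarrow> 'v \<Rightarrow> 'v set" where
  "Etil VMax VMin T E w \<rho> v =
     {v' \<in> set_pmf (\<rho> v). \<forall>v'' \<in> set_pmf (\<rho> v).
        ereal (real_of_int (w v v')) + val_m_rho VMax VMin T E w \<rho> v'
          \<le> ereal (real_of_int (w v v'')) + val_m_rho VMax VMin T E w \<rho> v''}"

definition Gtil_edges :: "'v set \<Rightarrow> 'v set \<Rightarrow> 'v set \<Rightarrow> ('v \<times> 'v) set \<Rightarrow> ('v \<Rightarrow> 'v \<Rightarrow> int) \<Rightarrow> ('v \<Rightarrow> 'v pmf) \<Rightarrow> ('v \<times> 'v) set" where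
  "Gtil_edges VMax VMin T E w \<rho> =
     {(v, v') \<in> E. v \<in> VMin \<longrightarrow> v' \<in> Etil VMax VMin T E w \<rho> v}"

definition attr_dist :: "'v set \<Rightarrow> 'v set \<Rightarrow> 'v set \<Rightarrow> ('v \<times> 'v) set \<Rightarrow> ('v \<Rightarrow> 'v pmf) \<Rightarrow> 'v \<Rightarrow> enat" where
  "attr_dist VMax VMin T E \<rho> =
     lfp (\<lambda>f v. if v \<in> T then 0
               else if v \<in> VMin then 1 + Min (f ` set_pmf (\<rho> v))
               else if v \<in> VMax then 1 + Max (f ` (E `` {v}))
               else 0)"

definition conf_cycle :: "('v \<times> 'v) set \<Rightarrow> 'v set \<Rightarrow> ('v \<Rightarrow> 'v) \<Rightarrow> 'v list \<Rightarrow> bool" where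
  "conf_cycle Ed VMin \<sigma> c \<longleftrightarrow> c \<noteq> [] \<and>
     (\<forall>i < length c. (c ! i, c ! (Suc i mod length c)) \<in> Ed \<and>
        (c ! i \<in> VMin \<longrightarrow> c ! (Suc i mod length c) = \<sigma> (c ! i)))"

definition cycle_weight :: "('v \<Rightarrow> 'v \<Rightarrow> int) \<Rightarrow> 'v list \<Rightarrow> int" where
  "cycle_weight w c = (\<Sum>i < length c. w (c ! i) (c ! (Suc i mod length c)))"

end

theory Submission
  imports Defs
begin

text \<open>Let \<open>val\<close> be the value of \<open>\<rho>\<close> against memoryless strategies of Max. Since \<open>\<rho>\<close>
  reaches \<open>T\<close> almost surely against all of them, the attractor distance \<open>d\<close> is finite, and a
  ranking function built from \<open>d\<close> shows that every expected payoff is the finite limit of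
  Bellman iterates. Hence \<open>val\<close> is finite, and local deviations of Max (which can be
  combined into uniformly \<open>\<epsilon>\<close>-optimal memoryless strategies) give
  \<open>w v u + val u \<le> val v\<close> on every edge of Max and
  \<open>\<Sum>u. \<rho> v u * (w v u + val u) \<le> val v\<close> at every vertex of Min. So
  \<open>w v u \<le> val v - val u\<close> on every edge of \<open>G\<close>-tilde, a cycle of nonnegative weight is tight on
  all its edges, and tightness at a Min vertex \<open>v\<close> forces every successor in the support of
  \<open>\<rho> v\<close> into \<open>E\<close>-tilde. Then \<open>\<sigma>1 v\<close> has minimal \<open>d\<close> in that support, so \<open>d\<close> strictly
  decreases along every edge of the cycle, which is absurd.\<close>

lemma Min_image_mono:
  fixes f g :: "'a \<Rightarrow> 'b::linorder"
  assumes "finite S" "S \<noteq> {}" "\<And>x. x \<in> S \<Longrightarrow> f x \<le> g x"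
  shows "Min (f ` S) \<le> Min (g ` S)"
proof -
  have "Min (g ` S) \<in> g ` S"
    using assms(1,2) by (intro Min_in) auto
  then obtain y where y: "y \<in> S" "Min (g ` S) = g y"
    by auto
  have "Min (f ` S) \<le> f y"
    using assms(1) y(1) by simp
  then show ?thesis
    using assms(3)[OF y(1)] y(2) by simp
qed

lemma Max_image_mono:
  fixes f g :: "'a \<Rightarrow> 'b::linorder"
  assumes "finite S" "S \<noteq> {}" "\<And>x. x \<in> S \<Longrightarrow> f x \<le> g x"
  shows "Max (f ` S) \<le> Max (g ` S)"
proof -
  have "Max (f ` S) \<in> f ` S"
    using assms(1,2) by (intro Max_in) auto
  then obtain y where y: "y \<in> S" "Max (f ` S) = f y"
    by auto
  have "g y \<le> Max (g ` S)"
    using assms(1) y(1) by simp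
  then show ?thesis
    using assms(3)[OF y(1)] y(2) by simp
qed

lemma sum_lessThan_Suc_mod:
  assumes "0 < k"
  shows "(\<Sum>i<k. f (Suc i mod k)) = (\<Sum>i<k. f i)"
proof -
  obtain m where k: "k = Suc m" using assms not0_implies_Suc by blast
  have "(\<Sum>i<m. f (Suc i mod Suc m)) = (\<Sum>i<m. f (Suc i))"
    by (intro sum.cong) auto
  then have "(\<Sum>i<k. f (Suc i mod k)) = (\<Sum>i<m. f (Suc i)) + f 0"
    unfolding k by simp
  also have "\<dots> = (\<Sum>i<k. f i)"
    unfolding k sum.lessThan_Suc_shift by (simp add: add.commute)
  finally show ?thesis .
qed

lemma cycle_not_strictly_decreasing:
  fixes f :: "'a \<Rightarrow> 'b::strict_ordered_comm_monoid_add"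
  assumes "c \<noteq> []"
  shows "\<not> (\<forall>i < length c. f (c ! (Suc i mod length c)) < f (c ! i))"
proof
  assume dec: "\<forall>i < length c. f (c ! (Suc i mod length c)) < f (c ! i)"
  have "(\<Sum>i<length c. f (c ! (Suc i mod length c))) < (\<Sum>i<length c. f (c ! i))"
    using assms dec by (intro sum_strict_mono) auto
  then show False
    using sum_lessThan_Suc_mod[of "length c" "\<lambda>i. f (c ! i)"] assms by simp
qed

lemma cycle_weight_nonneg_imp_tight:
  fixes p :: "'a \<Rightarrow> real"
  assumes c: "c \<noteq> []"
    and slack: "\<And>i. i < length c \<Longrightarrow>
      real_of_int (w (c ! i) (c ! (Suc i mod length c))) + p (c ! (Suc i mod length c)) \<le> p (c ! i)"
    and nonneg: "0 \<le> cycle_weight w c"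
    and i: "i < length c"
  shows "real_of_int (w (c ! i) (c ! (Suc i mod length c))) + p (c ! (Suc i mod length c)) = p (c ! i)"
proof -
  define k where "k = length c"
  define nx where "nx i = c ! (Suc i mod k)" for i
  define s where "s i = p (c ! i) - real_of_int (w (c ! i) (nx i)) - p (nx i)" for i
  have s_nonneg: "\<forall>i\<in>{..<k}. 0 \<le> s i"
    using slack unfolding s_def nx_def k_def by (simp add: algebra_simps)
  have "(\<Sum>i<k. p (nx i)) = (\<Sum>i<k. p (c ! i))"
    unfolding nx_def k_def using c by (intro sum_lessThan_Suc_mod) simp
  then have "(\<Sum>i<k. s i) = - real_of_int (cycle_weight w c)"
    unfolding s_def cycle_weight_def k_def nx_def by (simp add: sum_subtractf)
  moreover have "0 \<le> (\<Sum>i<k. s i)"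
    using s_nonneg by (intro sum_nonneg) auto
  ultimately have "(\<Sum>i<k. s i) = 0"
    using nonneg by linarith
  then have "s i = 0"
    using s_nonneg i sum_nonneg_eq_0_iff[of "{..<k}" s] unfolding k_def by simp
  then show ?thesis unfolding s_def nx_def k_def by simp
qed

lemma pmf_weighted_sum_ge_lower_bound:
  fixes g :: "'a \<Rightarrow> real"
  assumes "set_pmf p \<subseteq> A" "finite A" "\<And>u. u \<in> set_pmf p \<Longrightarrow> m \<le> g u"
  shows "m \<le> (\<Sum>u\<in>A. pmf p u * g u)"
proof -
  have "m = (\<Sum>u\<in>A. pmf p u * m)"
    using assms sum_pmf_eq_1[of A p] by (simp add: sum_distrib_right[symmetric])
  also have "\<dots> \<le> (\<Sum>u\<in>A. pmf p u * g u)"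
  proof (intro sum_mono)
    fix u show "pmf p u * m \<le> pmf p u * g u"
      using assms(3)[of u] by (cases "u \<in> set_pmf p") (auto simp: set_pmf_eq)
  qed
  finally show ?thesis .
qed

lemma pmf_weighted_sum_le_lower_bound_imp_eq:
  fixes g :: "'a \<Rightarrow> real"
  assumes "set_pmf p \<subseteq> A" "finite A" "\<And>u. u \<in> set_pmf p \<Longrightarrow> m \<le> g u"
    and le: "(\<Sum>u\<in>A. pmf p u * g u) \<le> m" and u: "u \<in> set_pmf p"
  shows "g u = m"
proof -
  have nonneg: "\<forall>x\<in>A. 0 \<le> pmf p x * (g x - m)"
  proof
    fix x show "0 \<le> pmf p x * (g x - m)"
      using assms(3)[of x] by (cases "x \<in> set_pmf p") (auto simp: set_pmf_eq)
  qed
  have "(\<Sum>x\<in>A. pmf p x * (g x - m)) = (\<Sum>x\<in>A. pmf p x * g x) - m"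
    using assms(1,2) sum_pmf_eq_1[of A p]
    by (simp add: right_diff_distrib sum_subtractf sum_distrib_right[symmetric])
  moreover have "0 \<le> (\<Sum>x\<in>A. pmf p x * (g x - m))"
    using nonneg by (intro sum_nonneg) auto
  ultimately have "(\<Sum>x\<in>A. pmf p x * (g x - m)) = 0"
    using le by linarith
  moreover have "u \<in> A" using u assms(1) by blast
  ultimately have "pmf p u * (g u - m) = 0"
    using nonneg sum_nonneg_eq_0_iff[OF assms(2), of "\<lambda>x. pmf p x * (g x - m)"] by blast
  then show ?thesis using u by (auto simp: set_pmf_eq)
qed

lemma expectation_pmf_eq_sum:
  fixes f :: "'a \<Rightarrow> real"
  assumes "finite A" "set_pmf p \<subseteq> A"
  shows "measure_pmf.expectation p f = (\<Sum>u\<in>A. pmf p u * f u)"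
  using assms by (subst integral_measure_pmf_real[of A]) (auto simp: mult.commute)

locale min_strategy =
  fixes VMax VMin T :: "'v set" and E :: "('v \<times> 'v) set" and w :: "'v \<Rightarrow> 'v \<Rightarrow> int"
    and \<rho> :: "'v \<Rightarrow> 'v pmf"
  assumes game: "spg VMax VMin T E" and rho: "ml_strat E VMin \<rho>"
begin

abbreviation "V \<equiv> VMax \<union> VMin \<union> T"
abbreviation "Max_strats \<equiv> {\<tau>. ml_strat E VMax \<tau>}"
abbreviation "step \<tau> \<equiv> mc_step VMax VMin \<rho> \<tau>"
abbreviation "paths \<tau> \<equiv> mc_paths VMax VMin \<rho> \<tau>"

lemma finite_V: "finite V"
  using game by (simp add: spg_def)

lemma disjoint: "VMax \<inter> VMin = {}" "VMax \<inter> T = {}" "VMin \<inter> T = {}"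
  using game by (auto simp: spg_def)

lemma edge_in_V: "(s, u) \<in> E \<Longrightarrow> s \<in> VMax \<union> VMin \<and> u \<in> V"
  using game by (auto simp: spg_def)

lemma ex_edge: "s \<in> VMax \<union> VMin \<Longrightarrow> \<exists>u. (s, u) \<in> E"
  using game by (auto simp: spg_def)

lemma finite_successors: "finite (E `` {s})"
  using edge_in_V by (blast intro: finite_subset[OF _ finite_V])

lemma set_rho_subset_successors: "s \<in> VMin \<Longrightarrow> set_pmf (\<rho> s) \<subseteq> E `` {s}"
  using rho by (simp add: ml_strat_def)

lemma set_rho_subset_V: "s \<in> VMin \<Longrightarrow> set_pmf (\<rho> s) \<subseteq> V"
  using set_rho_subset_successors edge_in_V by blast

lemma finite_set_rho: "s \<in> VMin \<Longrightarrow> finite (set_pmf (\<rho> s))"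
  using set_rho_subset_V finite_V by (rule finite_subset)

lemma sum_pmf_rho: "s \<in> VMin \<Longrightarrow> (\<Sum>u\<in>V. pmf (\<rho> s) u) = 1"
  using set_rho_subset_V finite_V by (intro sum_pmf_eq_1)

lemma step_T: "s \<in> T \<Longrightarrow> step \<tau> s = return_pmf s"
  using disjoint by (auto simp: mc_step_def)

lemma step_Min: "s \<in> VMin \<Longrightarrow> step \<tau> s = \<rho> s"
  by (simp add: mc_step_def)

lemma step_Max: "s \<in> VMax \<Longrightarrow> step \<tau> s = \<tau> s"
  using disjoint by (auto simp: mc_step_def)

lemma set_step_subset_successors:
  assumes "\<tau> \<in> Max_strats" "s \<in> VMax \<union> VMin"
  shows "set_pmf (step \<tau> s) \<subseteq> E `` {s}"
  using assms set_rho_subset_successors[of s] unfolding ml_strat_def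
  by (cases "s \<in> VMin") (auto simp: step_Min step_Max)

lemma set_step_subset_V:
  assumes "\<tau> \<in> Max_strats" "s \<in> V"
  shows "set_pmf (step \<tau> s) \<subseteq> V"
proof (cases "s \<in> T")
  case True
  then show ?thesis by (simp add: step_T)
next
  case False
  then show ?thesis
    using assms set_step_subset_successors[of \<tau> s] edge_in_V by blast
qed

lemma sum_pmf_step: "\<tau> \<in> Max_strats \<Longrightarrow> s \<in> V \<Longrightarrow> (\<Sum>u\<in>V. pmf (step \<tau> s) u) = 1"
  using set_step_subset_V finite_V by (intro sum_pmf_eq_1)

lemma set_paths: "h \<in> set_pmf (paths \<tau> v n) \<Longrightarrow> length h = Suc n \<and> hd h = v"
proof (induction n arbitrary: h)
  case (Suc n)
  then obtain h' u where "h' \<in> set_pmf (paths \<tau> v n)" "h = h' @ [u]"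
    by auto
  with Suc.IH[OF this(1)] show ?case
    by (cases h') auto
qed simp

lemma set_paths_subset_V:
  assumes "\<tau> \<in> Max_strats" "v \<in> V"
  shows "h \<in> set_pmf (paths \<tau> v n) \<Longrightarrow> set h \<subseteq> V"
proof (induction n arbitrary: h)
  case (Suc n)
  then obtain h' u where h': "h' \<in> set_pmf (paths \<tau> v n)" "h = h' @ [u]"
    and u: "u \<in> set_pmf (step \<tau> (last h'))"
    by auto
  have "h' \<noteq> []"
    using set_paths[OF h'(1)] by auto
  then have "last h' \<in> V"
    using Suc.IH[OF h'(1)] last_in_set by blast
  then show ?case
    using Suc.IH[OF h'(1)] h'(2) u set_step_subset_V[OF assms(1)] by auto
qed (use assms in simp)

lemma finite_set_paths:
  assumes "\<tau> \<in> Max_strats" "v \<in> V"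
  shows "finite (set_pmf (paths \<tau> v n))"
  using set_paths_subset_V[OF assms] set_paths
  by (blast intro: finite_subset[OF _ finite_lists_length_eq[OF finite_V, of "Suc n"]])

lemma paths_Suc_Cons:
  "paths \<tau> v (Suc n) = bind_pmf (step \<tau> v) (\<lambda>u. map_pmf ((#) v) (paths \<tau> u n))"
proof (induction n arbitrary: v)
  case 0
  then show ?case by (simp add: map_pmf_def bind_return_pmf)
next
  case (Suc n)
  have "paths \<tau> v (Suc (Suc n)) = bind_pmf (step \<tau> v) (\<lambda>u. bind_pmf (paths \<tau> u n)
          (\<lambda>h. map_pmf (\<lambda>x. (v # h) @ [x]) (step \<tau> (last (v # h)))))"
    by (simp only: mc_paths.simps(2)[of _ _ _ _ _ "Suc n"] Suc.IH bind_assoc_pmf bind_map_pmf)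
  also have "\<dots> = bind_pmf (step \<tau> v) (\<lambda>u. map_pmf ((#) v) (paths \<tau> u (Suc n)))"
    unfolding mc_paths.simps map_bind_pmf
  proof (intro bind_pmf_cong refl)
    fix u h assume "h \<in> set_pmf (paths \<tau> u n)"
    then have "h \<noteq> []" using set_paths by fastforce
    then show "map_pmf (\<lambda>x. (v # h) @ [x]) (step \<tau> (last (v # h))) =
        map_pmf ((#) v) (map_pmf (\<lambda>x. h @ [x]) (step \<tau> (last h)))"
      by (simp add: pmf.map_comp o_def)
  qed
  finally show ?case .
qed

lemma reach_prob_eq_0_in_trap:
  assumes D: "D \<subseteq> VMax \<union> VMin"
    and Min_closed: "\<And>s. s \<in> D \<Longrightarrow> s \<in> VMin \<Longrightarrow> set_pmf (\<rho> s) \<subseteq> D"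
    and Max_closed: "\<And>s. s \<in> D \<Longrightarrow> s \<in> VMax \<Longrightarrow> \<exists>u\<in>D. (s, u) \<in> E"
  obtains \<tau> where "\<tau> \<in> Max_strats" "\<And>v. v \<in> D \<Longrightarrow> reach_prob VMax VMin T \<rho> \<tau> v = 0"
proof -
  have "\<forall>s. \<exists>u. (s \<in> VMax \<longrightarrow> (s, u) \<in> E) \<and> (s \<in> D \<and> s \<in> VMax \<longrightarrow> u \<in> D)"
    using Max_closed ex_edge by blast
  then obtain nx where nx: "\<And>s. s \<in> VMax \<Longrightarrow> (s, nx s) \<in> E"
    "\<And>s. s \<in> D \<Longrightarrow> s \<in> VMax \<Longrightarrow> nx s \<in> D"
    by metis
  define \<tau> where "\<tau> s = return_pmf (nx s)" for s
  have \<tau>: "\<tau> \<in> Max_strats"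
    using nx(1) by (simp add: ml_strat_def \<tau>_def)
  have stays: "set h \<subseteq> D" if "v \<in> D" "h \<in> set_pmf (paths \<tau> v n)" for v h n
    using that(2)
  proof (induction n arbitrary: h)
    case (Suc n)
    then obtain h' u where h': "h' \<in> set_pmf (paths \<tau> v n)" "h = h' @ [u]"
      and u: "u \<in> set_pmf (step \<tau> (last h'))"
      by auto
    have "h' \<noteq> []"
      using set_paths[OF h'(1)] by auto
    then have last: "last h' \<in> D"
      using Suc.IH[OF h'(1)] last_in_set by blast
    have "u \<in> D"
    proof (cases "last h' \<in> VMin")
      case True
      then show ?thesis using u Min_closed[OF last] by (auto simp: step_Min)
    next
      case False
      then have "last h' \<in> VMax" using last D by blast
      then show ?thesis using u nx(2)[OF last] by (simp add: step_Max \<tau>_def)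
    qed
    then show ?case using Suc.IH[OF h'(1)] h'(2) by simp
  qed (use that in simp)
  have "reach_prob VMax VMin T \<rho> \<tau> v = 0" if "v \<in> D" for v
  proof -
    have "D \<inter> T = {}" using D disjoint by blast
    then have "measure_pmf.prob (paths \<tau> v n) {h. \<exists>u \<in> set h. u \<in> T} = 0" for n
      unfolding measure_pmf_zero_iff using stays[OF that] by blast
    then show ?thesis by (simp add: reach_prob_def)
  qed
  then show ?thesis using that \<tau> by blast
qed

section \<open>The Bellman operator of a fixed pair of memoryless strategies\<close>

definition bellman :: "('v \<Rightarrow> 'v pmf) \<Rightarrow> ('v \<Rightarrow> real) \<Rightarrow> 'v \<Rightarrow> real" where
  "bellman \<tau> x s = (if s \<in> T then 0 else (\<Sum>u\<in>V. pmf (step \<tau> s) u * (real_of_int (w s u) + x u)))"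

definition transfer :: "('v \<Rightarrow> 'v pmf) \<Rightarrow> ('v \<Rightarrow> real) \<Rightarrow> 'v \<Rightarrow> real" where
  "transfer \<tau> x s = (if s \<in> T then 0 else (\<Sum>u\<in>V. pmf (step \<tau> s) u * x u))"

lemma bellman_eq_transfer: "bellman \<tau> x s = bellman \<tau> (\<lambda>_. 0) s + transfer \<tau> x s"
  unfolding bellman_def transfer_def by (simp add: sum.distrib distrib_left)

lemma bellman_cong_step: "step \<tau> s = step \<tau>' s \<Longrightarrow> bellman \<tau> x s = bellman \<tau>' x s"
  by (simp add: bellman_def)

lemma bellman_mono: "(\<And>u. u \<in> V \<Longrightarrow> x u \<le> y u) \<Longrightarrow> bellman \<tau> x s \<le> bellman \<tau> y s"
  unfolding bellman_def by (auto intro!: sum_mono mult_left_mono)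

lemma transfer_mono: "(\<And>u. u \<in> V \<Longrightarrow> x u \<le> y u) \<Longrightarrow> transfer \<tau> x s \<le> transfer \<tau> y s"
  unfolding transfer_def by (auto intro!: sum_mono mult_left_mono)

lemma transfer_add: "transfer \<tau> (\<lambda>u. x u + y u) s = transfer \<tau> x s + transfer \<tau> y s"
  unfolding transfer_def by (simp add: sum.distrib distrib_left)

lemma transfer_scale: "transfer \<tau> (\<lambda>u. c * x u) s = c * transfer \<tau> x s"
  unfolding transfer_def by (simp add: sum_distrib_left mult_ac)

lemma funpow_bellman_mono:
  "(\<And>u. u \<in> V \<Longrightarrow> x u \<le> y u) \<Longrightarrow> s \<in> V \<Longrightarrow> (bellman \<tau> ^^ n) x s \<le> (bellman \<tau> ^^ n) y s"
  by (induction n arbitrary: s) (auto intro!: bellman_mono)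

lemma funpow_transfer_mono:
  "(\<And>u. u \<in> V \<Longrightarrow> x u \<le> y u) \<Longrightarrow> s \<in> V \<Longrightarrow> (transfer \<tau> ^^ n) x s \<le> (transfer \<tau> ^^ n) y s"
  by (induction n arbitrary: s) (auto intro!: transfer_mono)

lemma funpow_transfer_add:
  "(transfer \<tau> ^^ n) (\<lambda>u. x u + y u) = (\<lambda>s. (transfer \<tau> ^^ n) x s + (transfer \<tau> ^^ n) y s)"
  by (induction n) (simp_all add: transfer_add)

lemma funpow_transfer_scale:
  "(transfer \<tau> ^^ n) (\<lambda>u. c * x u) = (\<lambda>s. c * (transfer \<tau> ^^ n) x s)"
  by (induction n) (simp_all add: transfer_scale)

lemma funpow_bellman_eq_transfer:
  "(bellman \<tau> ^^ n) x s = (bellman \<tau> ^^ n) (\<lambda>_. 0) s + (transfer \<tau> ^^ n) x s"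
proof (induction n arbitrary: s)
  case (Suc n)
  have "(bellman \<tau> ^^ Suc n) x s
      = bellman \<tau> (\<lambda>_. 0) s + transfer \<tau> ((bellman \<tau> ^^ n) (\<lambda>_. 0)) s + transfer \<tau> ((transfer \<tau> ^^ n) x) s"
    by (simp add: Suc.IH[abs_def] transfer_add bellman_eq_transfer[of _ "\<lambda>s. _ s + _ s"])
  also have "\<dots> = (bellman \<tau> ^^ Suc n) (\<lambda>_. 0) s + (transfer \<tau> ^^ Suc n) x s"
    by (simp add: bellman_eq_transfer[of _ "(bellman \<tau> ^^ n) (\<lambda>_. 0)"])
  finally show ?case .
qed simp

lemma expectation_tp_paths:
  assumes \<tau>: "\<tau> \<in> Max_strats"
  shows "v \<in> V \<Longrightarrow>
    measure_pmf.expectation (paths \<tau> v n) (\<lambda>h. real_of_int (tp_fin T w h)) = (bellman \<tau> ^^ n) (\<lambda>_. 0) v"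
proof (induction n arbitrary: v)
  case (Suc n)
  let ?tp = "\<lambda>h. real_of_int (tp_fin T w h)"
  have fin: "finite (set_pmf (map_pmf ((#) v) (paths \<tau> u n)))" if "u \<in> V" for u
    using finite_set_paths[OF \<tau> that] by simp
  have "measure_pmf.expectation (paths \<tau> v (Suc n)) ?tp
      = (\<Sum>u\<in>V. pmf (step \<tau> v) u * measure_pmf.expectation (paths \<tau> u n) (\<lambda>h. ?tp (v # h)))"
    unfolding paths_Suc_Cons using \<tau> Suc.prems
    by (subst pmf_expectation_bind[OF finite_V fin set_step_subset_V]) simp_all
  also have "\<dots> = bellman \<tau> ((bellman \<tau> ^^ n) (\<lambda>_. 0)) v"
  proof (cases "v \<in> T")
    case True
    have "tp_fin T w (v # h) = 0" for h
      using True by (cases h) auto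
    then have "measure_pmf.expectation (paths \<tau> u n) (\<lambda>h. ?tp (v # h)) = 0" for u
      by (subst integral_cong_AE[where g="\<lambda>_. 0"]) (simp_all add: AE_measure_pmf_iff)
    then show ?thesis using True by (simp add: bellman_def)
  next
    case False
    have "measure_pmf.expectation (paths \<tau> u n) (\<lambda>h. ?tp (v # h))
        = real_of_int (w v u) + (bellman \<tau> ^^ n) (\<lambda>_. 0) u" if "u \<in> V" for u
    proof -
      have "tp_fin T w (v # h) = w v u + tp_fin T w h" if "h \<in> set_pmf (paths \<tau> u n)" for h
        using False set_paths[OF that] by (cases h) auto
      then have "measure_pmf.expectation (paths \<tau> u n) (\<lambda>h. ?tp (v # h))
          = measure_pmf.expectation (paths \<tau> u n) (\<lambda>h. real_of_int (w v u) + ?tp h)"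
        by (intro integral_cong_AE) (simp_all add: AE_measure_pmf_iff)
      also have "\<dots> = real_of_int (w v u) + measure_pmf.expectation (paths \<tau> u n) ?tp"
        using finite_set_paths[OF \<tau> that]
        by (subst Bochner_Integration.integral_add) (auto intro: integrable_measure_pmf_finite)
      finally show ?thesis using Suc.IH[OF that] by simp
    qed
    then show ?thesis
      using False by (simp add: bellman_def)
  qed
  finally show ?case by simp
qed simp

section \<open>Attractor distance\<close>

abbreviation "adist \<equiv> attr_dist VMax VMin T E \<rho>"

lemma adist_unfold:
  "adist v = (if v \<in> T then 0
               else if v \<in> VMin then 1 + Min (adist ` set_pmf (\<rho> v))
               else if v \<in> VMax then 1 + Max (adist ` (E `` {v}))
               else 0)"
proof -
  let ?F = "\<lambda>f v. if v \<in> T then 0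
               else if v \<in> VMin then 1 + Min (f ` set_pmf (\<rho> v))
               else if v \<in> VMax then 1 + Max (f ` (E `` {v}))
               else (0::enat)"
  have "mono ?F"
  proof (intro monoI le_funI)
    fix f g :: "'v \<Rightarrow> enat" and v
    assume "f \<le> g"
    then have fg: "f u \<le> g u" for u by (simp add: le_fun_def)
    have Min: "Min (f ` set_pmf (\<rho> v)) \<le> Min (g ` set_pmf (\<rho> v))" if "v \<in> VMin"
      using finite_set_rho[OF that] set_pmf_not_empty fg by (intro Min_image_mono) auto
    have Max: "Max (f ` (E `` {v})) \<le> Max (g ` (E `` {v}))" if "v \<in> VMax"
      using finite_successors ex_edge[of v] that fg by (intro Max_image_mono) auto
    show "?F f v \<le> ?F g v"
      using Min Max by (auto intro: add_left_mono)
  qed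
  then show ?thesis
    unfolding attr_dist_def by (subst lfp_unfold) auto
qed

lemma adist_T: "v \<in> T \<Longrightarrow> adist v = 0"
  by (subst adist_unfold) simp

lemma adist_Min: "v \<in> VMin \<Longrightarrow> adist v = 1 + Min (adist ` set_pmf (\<rho> v))"
  using disjoint by (subst adist_unfold) auto

lemma adist_Max: "v \<in> VMax \<Longrightarrow> adist v = 1 + Max (adist ` (E `` {v}))"
  using disjoint by (subst adist_unfold) auto

end

locale reaching_min_strategy = min_strategy +
  assumes reach: "\<forall>v \<in> VMax \<union> VMin \<union> T. \<forall>\<tau>. ml_strat E VMax \<tau> \<longrightarrow>
                    reach_prob VMax VMin T \<rho> \<tau> v = 1"
begin

lemma adist_finite:
  assumes "v \<in> V"
  shows "adist v \<noteq> \<infinity>"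
proof
  assume "adist v = \<infinity>"
  define D where "D = {v \<in> V. adist v = \<infinity>}"
  have "1 + x = \<infinity> \<longleftrightarrow> x = (\<infinity>::enat)" for x
    by (cases x) (auto simp: one_enat_def)
  note inf_iff = this
  have D_sub: "D \<subseteq> VMax \<union> VMin"
    using adist_T by (force simp: D_def)
  have Min_closed: "set_pmf (\<rho> s) \<subseteq> D" if s: "s \<in> D" "s \<in> VMin" for s
  proof -
    have "Min (adist ` set_pmf (\<rho> s)) = \<infinity>"
      using s adist_Min inf_iff by (simp add: D_def)
    then have "adist u = \<infinity>" if "u \<in> set_pmf (\<rho> s)" for u
      using Min_le[of "adist ` set_pmf (\<rho> s)" "adist u"] finite_set_rho[OF s(2)] that by simp
    then show ?thesis
      using set_rho_subset_V[OF s(2)] by (auto simp: D_def)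
  qed
  have Max_closed: "\<exists>u\<in>D. (s, u) \<in> E" if s: "s \<in> D" "s \<in> VMax" for s
  proof -
    have "Max (adist ` (E `` {s})) = \<infinity>"
      using s adist_Max inf_iff by (simp add: D_def)
    moreover have "Max (adist ` (E `` {s})) \<in> adist ` (E `` {s})"
      using finite_successors ex_edge[of s] s(2) by (intro Max_in) auto
    ultimately show ?thesis
      using edge_in_V by (force simp: D_def)
  qed
  obtain \<tau> where "\<tau> \<in> Max_strats" "\<And>v. v \<in> D \<Longrightarrow> reach_prob VMax VMin T \<rho> \<tau> v = 0"
    using reach_prob_eq_0_in_trap[OF D_sub Min_closed Max_closed] by blast
  moreover have "v \<in> D"
    using assms \<open>adist v = \<infinity>\<close> by (simp add: D_def)
  ultimately show False
    using reach assms by fastforce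
qed

definition rank where
  "rank v = the_enat (adist v)"

lemma adist_eq_rank: "v \<in> V \<Longrightarrow> adist v = enat (rank v)"
  using adist_finite[of v] by (cases "adist v") (auto simp: rank_def)

lemma rank_Min:
  assumes "s \<in> VMin"
  shows "rank s = Suc (Min (rank ` set_pmf (\<rho> s)))"
proof -
  have "adist ` set_pmf (\<rho> s) = (\<lambda>u. enat (rank u)) ` set_pmf (\<rho> s)"
    using set_rho_subset_V[OF assms] adist_eq_rank by (intro image_cong) auto
  then have "adist ` set_pmf (\<rho> s) = enat ` rank ` set_pmf (\<rho> s)"
    by (simp add: image_image)
  moreover have "Min (enat ` rank ` set_pmf (\<rho> s)) = enat (Min (rank ` set_pmf (\<rho> s)))"
    using finite_set_rho[OF assms] set_pmf_not_empty
    by (intro mono_Min_commute[symmetric]) (auto simp: mono_def)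
  ultimately show ?thesis
    using adist_Min[OF assms] adist_eq_rank[of s] assms by (simp add: one_enat_def)
qed

lemma rank_Max:
  assumes "s \<in> VMax" "(s, u) \<in> E"
  shows "rank u < rank s"
proof -
  have "adist u \<le> Max (adist ` (E `` {s}))"
    using assms(2) finite_successors by simp
  then have "1 + adist u \<le> adist s"
    using adist_Max[OF assms(1)] by (simp add: add_left_mono)
  then show ?thesis
    using adist_eq_rank[of u] adist_eq_rank[of s] assms edge_in_V by (simp add: one_enat_def)
qed

lemma rank_T: "v \<in> T \<Longrightarrow> rank v = 0"
  by (simp add: rank_def adist_T zero_enat_def)

section \<open>A ranking function for the time to reach the targets\<close>

definition pmin :: real where
  "pmin = Min (insert (1/2) ((\<lambda>(s, u). pmf (\<rho> s) u) ` (SIGMA s:VMin. set_pmf (\<rho> s))))"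

lemma finite_rho_probs: "finite ((\<lambda>(s, u). pmf (\<rho> s) u) ` (SIGMA s:VMin. set_pmf (\<rho> s)))"
  using finite_V finite_set_rho by (intro finite_imageI finite_SigmaI) (auto intro: finite_subset)

lemma pmin_pos: "0 < pmin"
  unfolding pmin_def using finite_rho_probs by (auto simp: pmf_positive)

lemma pmin_le_half: "pmin \<le> 1/2"
  unfolding pmin_def using finite_rho_probs by (intro Min_le) auto

lemma pmin_le_pmf: "s \<in> VMin \<Longrightarrow> u \<in> set_pmf (\<rho> s) \<Longrightarrow> pmin \<le> pmf (\<rho> s) u"
  unfolding pmin_def using finite_rho_probs by (intro Min_le) auto

definition rank_max :: nat where
  "rank_max = Max (insert 0 (rank ` V))"

lemma rank_le_rank_max: "v \<in> V \<Longrightarrow> rank v \<le> rank_max"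
  unfolding rank_max_def using finite_V by simp

definition pot_scale :: real where
  "pot_scale = 2 / pmin ^ rank_max"

lemma pot_scale_pos: "0 < pot_scale"
  using pmin_pos by (simp add: pot_scale_def)

lemma pot_scale_mult: "pot_scale * pmin ^ rank_max = 2"
  using pmin_pos by (simp add: pot_scale_def)

text \<open>From rank \<open>k\<close>, Max can only lower the rank, and Min lowers it with probability at least
  \<open>pmin\<close>; the scale is chosen so that \<open>pot \<circ> rank\<close> then drops by at least 1 in expectation
  per step outside the targets (lemma \<open>pot_rank_step\<close>).\<close>

definition pot :: "nat \<Rightarrow> real" where
  "pot k = pot_scale * (1 - pmin ^ k)"

lemma pot_0: "pot 0 = 0"
  by (simp add: pot_def)

lemma pot_mono: "j \<le> k \<Longrightarrow> pot j \<le> pot k"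
proof -
  assume "j \<le> k"
  then have "pmin ^ k \<le> pmin ^ j"
    using pmin_pos pmin_le_half by (intro power_decreasing) auto
  then show ?thesis
    unfolding pot_def using pot_scale_pos by (simp add: mult_left_mono)
qed

lemma pot_nonneg: "0 \<le> pot k"
  using pot_mono[of 0 k] by (simp add: pot_0)

lemma pot_Suc_ge:
  assumes "k < rank_max"
  shows "1 + pot k \<le> pot (Suc k)"
proof -
  have "pmin ^ rank_max \<le> pmin ^ k"
    using assms pmin_pos pmin_le_half by (intro power_decreasing) auto
  then have "2 \<le> pot_scale * pmin ^ k"
    using pot_scale_mult pot_scale_pos by (metis mult_left_mono less_imp_le)
  then have "2 * (1/2) \<le> pot_scale * pmin ^ k * (1 - pmin)"
    using pmin_le_half by (intro mult_mono) auto
  moreover have "pot (Suc k) - pot k = pot_scale * pmin ^ k * (1 - pmin)"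
    unfolding pot_def by (simp add: algebra_simps)
  ultimately show ?thesis by simp
qed

lemma pot_Suc_ge_mix: "1 + pmin * pot k + (1 - pmin) * pot rank_max \<le> pot (Suc k)"
proof -
  have "pot (Suc k) - (pmin * pot k + (1 - pmin) * pot rank_max)
      = pot_scale * pmin ^ rank_max * (1 - pmin)"
    unfolding pot_def by (simp add: algebra_simps)
  then show ?thesis
    using pmin_le_half pot_scale_mult by simp
qed

lemma pot_rank_step_Min:
  assumes \<tau>: "\<tau> \<in> Max_strats" and s: "s \<in> VMin"
  shows "1 + (\<Sum>u\<in>V. pmf (step \<tau> s) u * pot (rank u)) \<le> pot (rank s)"
proof -
  obtain u0 where u0: "u0 \<in> set_pmf (\<rho> s)" "rank s = Suc (rank u0)"
    using Min_in[OF finite_imageI[OF finite_set_rho[OF s]]] rank_Min[OF s]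
    by (auto simp: set_pmf_not_empty)
  have u0_V: "u0 \<in> V"
    using set_rho_subset_V[OF s] u0(1) by blast
  have gap_nonneg: "0 \<le> pot rank_max - pot (rank u)" if "u \<in> V" for u
    using pot_mono[OF rank_le_rank_max[OF that]] by simp
  have "(\<Sum>u\<in>V. pmf (step \<tau> s) u * pot (rank u))
      = pot rank_max - (\<Sum>u\<in>V. pmf (step \<tau> s) u * (pot rank_max - pot (rank u)))"
    using sum_pmf_step[OF \<tau>] s
    by (simp add: right_diff_distrib sum_subtractf sum_distrib_right[symmetric])
  also have "\<dots> \<le> pot rank_max - pmf (step \<tau> s) u0 * (pot rank_max - pot (rank u0))"
    using member_le_sum[OF u0_V _ finite_V, of "\<lambda>u. pmf (step \<tau> s) u * (pot rank_max - pot (rank u))"]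
      gap_nonneg by simp
  also have "\<dots> \<le> pot rank_max - pmin * (pot rank_max - pot (rank u0))"
    using pmin_le_pmf[OF s u0(1)] gap_nonneg[OF u0_V]
    by (simp add: step_Min[OF s] mult_right_mono)
  also have "\<dots> = pmin * pot (rank u0) + (1 - pmin) * pot rank_max"
    by (simp add: algebra_simps)
  finally show ?thesis
    using pot_Suc_ge_mix[of "rank u0"] u0(2) by simp
qed

lemma pot_rank_step_Max:
  assumes \<tau>: "\<tau> \<in> Max_strats" and s: "s \<in> VMax"
  shows "1 + (\<Sum>u\<in>V. pmf (step \<tau> s) u * pot (rank u)) \<le> pot (rank s)"
proof -
  obtain u where "(s, u) \<in> E"
    using ex_edge s by blast
  then have "rank u < rank s"
    by (rule rank_Max[OF s])
  then obtain k where k: "rank s = Suc k"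
    using less_imp_Suc_add by blast
  have "pmf (step \<tau> s) u * pot (rank u) \<le> pmf (step \<tau> s) u * pot k" for u
  proof (cases "u \<in> set_pmf (step \<tau> s)")
    case True
    then have "(s, u) \<in> E"
      using set_step_subset_successors[OF \<tau>] s by blast
    then have "rank u \<le> k"
      using rank_Max[OF s] k by (simp add: less_Suc_eq_le)
    then show ?thesis by (simp add: pot_mono mult_left_mono)
  next
    case False
    then show ?thesis by (simp add: set_pmf_eq)
  qed
  then have "(\<Sum>u\<in>V. pmf (step \<tau> s) u * pot (rank u)) \<le> (\<Sum>u\<in>V. pmf (step \<tau> s) u * pot k)"
    by (intro sum_mono)
  also have "\<dots> = pot k"
    using sum_pmf_step[OF \<tau>] s by (simp add: sum_distrib_right[symmetric])
  finally show ?thesis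
    using pot_Suc_ge[of k] k rank_le_rank_max[of s] s by simp
qed

lemma pot_rank_step:
  assumes "\<tau> \<in> Max_strats" "s \<in> V" "s \<notin> T"
  shows "1 + (\<Sum>u\<in>V. pmf (step \<tau> s) u * pot (rank u)) \<le> pot (rank s)"
  using assms pot_rank_step_Min pot_rank_step_Max by blast

section \<open>Transience and the expected payoff\<close>

lemma transfer_pot_rank:
  assumes "\<tau> \<in> Max_strats" "s \<in> V"
  shows "of_bool (s \<notin> T) + transfer \<tau> (\<lambda>u. pot (rank u)) s \<le> pot (rank s)"
  using pot_rank_step[OF assms] by (auto simp: transfer_def rank_T pot_0)

lemma funpow_transfer_zero: "(transfer \<tau> ^^ n) (\<lambda>_. 0) = (\<lambda>_. 0)"
  using funpow_transfer_scale[where c=0 and x="\<lambda>_. 0"] by simp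

lemma funpow_transfer_nonneg:
  "(\<And>u. u \<in> V \<Longrightarrow> 0 \<le> x u) \<Longrightarrow> s \<in> V \<Longrightarrow> 0 \<le> (transfer \<tau> ^^ n) x s"
  using funpow_transfer_mono[where x="\<lambda>_. 0" and y=x and \<tau>=\<tau> and n=n]
  by (simp add: funpow_transfer_zero)

text \<open>The sum is the expected number of the first \<open>n\<close> steps that start outside \<open>T\<close>.\<close>

lemma sum_funpow_transfer_nontarget_le:
  assumes \<tau>: "\<tau> \<in> Max_strats"
  shows "s \<in> V \<Longrightarrow>
    (\<Sum>j<n. (transfer \<tau> ^^ j) (\<lambda>u. of_bool (u \<notin> T)) s)
      + (transfer \<tau> ^^ n) (\<lambda>u. pot (rank u)) s \<le> pot (rank s)"
proof (induction n arbitrary: s)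
  case (Suc n)
  have "(transfer \<tau> ^^ n) (\<lambda>u. of_bool (u \<notin> T) + transfer \<tau> (\<lambda>u. pot (rank u)) u) s
      \<le> (transfer \<tau> ^^ n) (\<lambda>u. pot (rank u)) s"
    using transfer_pot_rank[OF \<tau>] Suc.prems by (intro funpow_transfer_mono) auto
  then have "(transfer \<tau> ^^ n) (\<lambda>u. of_bool (u \<notin> T)) s + (transfer \<tau> ^^ Suc n) (\<lambda>u. pot (rank u)) s
      \<le> (transfer \<tau> ^^ n) (\<lambda>u. pot (rank u)) s"
    by (simp add: funpow_transfer_add funpow_Suc_right del: funpow.simps)
  then show ?case
    using Suc.IH[OF Suc.prems] by simp
qed simp

lemma funpow_transfer_nontarget_tendsto_0:
  assumes \<tau>: "\<tau> \<in> Max_strats" and s: "s \<in> V"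
  shows "(\<lambda>n. (transfer \<tau> ^^ n) (\<lambda>u. of_bool (u \<notin> T)) s) \<longlonglongrightarrow> 0"
proof (rule summable_LIMSEQ_zero, rule summableI_nonneg_bounded)
  fix n
  show "0 \<le> (transfer \<tau> ^^ n) (\<lambda>u. of_bool (u \<notin> T)) s"
    using s by (intro funpow_transfer_nonneg) auto
  have "0 \<le> (transfer \<tau> ^^ n) (\<lambda>u. pot (rank u)) s"
    using s pot_nonneg by (intro funpow_transfer_nonneg)
  then show "(\<Sum>j<n. (transfer \<tau> ^^ j) (\<lambda>u. of_bool (u \<notin> T)) s) \<le> pot (rank s)"
    using sum_funpow_transfer_nontarget_le[OF \<tau> s, of n] by simp
qed

lemma funpow_transfer_tendsto_0:
  assumes \<tau>: "\<tau> \<in> Max_strats" and x_T: "\<And>t. t \<in> T \<Longrightarrow> x t = 0" and s: "s \<in> V"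
  shows "(\<lambda>n. (transfer \<tau> ^^ n) x s) \<longlonglongrightarrow> 0"
proof -
  define M where "M = Max (insert 0 ((\<lambda>u. \<bar>x u\<bar>) ` V))"
  have M: "\<bar>x u\<bar> \<le> M * of_bool (u \<notin> T)" if "u \<in> V" for u
    using that finite_V x_T by (cases "u \<in> T") (auto simp: M_def)
  then have M_le: "x u \<le> M * of_bool (u \<notin> T)"
    and M_ge: "- M * of_bool (u \<notin> T) \<le> x u" if "u \<in> V" for u
    using M[OF that] by (simp_all add: abs_le_iff)
  have "(\<lambda>n. M * (transfer \<tau> ^^ n) (\<lambda>u. of_bool (u \<notin> T)) s) \<longlonglongrightarrow> M * 0"
    by (intro tendsto_mult_left funpow_transfer_nontarget_tendsto_0[OF \<tau> s])
  then have lim: "(\<lambda>n. M * (transfer \<tau> ^^ n) (\<lambda>u. of_bool (u \<notin> T)) s) \<longlonglongrightarrow> 0"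
    by simp
  have "\<bar>(transfer \<tau> ^^ n) x s\<bar> \<le> M * (transfer \<tau> ^^ n) (\<lambda>u. of_bool (u \<notin> T)) s" for n
  proof -
    have "(transfer \<tau> ^^ n) x s \<le> (transfer \<tau> ^^ n) (\<lambda>u. M * of_bool (u \<notin> T)) s"
      by (rule funpow_transfer_mono[OF M_le s])
    moreover have "(transfer \<tau> ^^ n) (\<lambda>u. - M * of_bool (u \<notin> T)) s \<le> (transfer \<tau> ^^ n) x s"
      by (rule funpow_transfer_mono[OF M_ge s])
    ultimately show ?thesis
      unfolding funpow_transfer_scale abs_le_iff by linarith
  qed
  then have "\<forall>\<^sub>F n in sequentially.
      norm ((transfer \<tau> ^^ n) x s) \<le> M * (transfer \<tau> ^^ n) (\<lambda>u. of_bool (u \<notin> T)) s"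
    by (simp add: always_eventually)
  from Lim_null_comparison[OF this lim] show ?thesis .
qed

definition wmax :: real where
  "wmax = Max (insert 0 ((\<lambda>(s, u). \<bar>real_of_int (w s u)\<bar>) ` (V \<times> V)))"

lemma wmax_nonneg: "0 \<le> wmax"
  unfolding wmax_def using finite_V by simp

lemma abs_weight_le_wmax: "s \<in> V \<Longrightarrow> u \<in> V \<Longrightarrow> \<bar>real_of_int (w s u)\<bar> \<le> wmax"
  unfolding wmax_def using finite_V by (intro Max_ge) auto

lemma abs_bellman_zero_le:
  assumes \<tau>: "\<tau> \<in> Max_strats" and s: "s \<in> V"
  shows "\<bar>bellman \<tau> (\<lambda>_. 0) s\<bar> \<le> wmax * of_bool (s \<notin> T)"
proof (cases "s \<in> T")
  case False
  have "\<bar>\<Sum>u\<in>V. pmf (step \<tau> s) u * real_of_int (w s u)\<bar> \<le> (\<Sum>u\<in>V. pmf (step \<tau> s) u * wmax)"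
    using abs_weight_le_wmax[OF s]
    by (intro order_trans[OF sum_abs] sum_mono) (simp add: abs_mult mult_left_mono)
  also have "\<dots> = wmax"
    using sum_pmf_step[OF \<tau> s] by (simp add: sum_distrib_right[symmetric])
  finally show ?thesis
    using False by (simp add: bellman_def)
qed (simp add: bellman_def)

definition payoff_bound where
  "payoff_bound s = wmax * pot (rank s)"

lemma payoff_bound_T: "s \<in> T \<Longrightarrow> payoff_bound s = 0"
  by (simp add: payoff_bound_def rank_T pot_0)

lemma payoff_bound_nonneg: "0 \<le> payoff_bound s"
  by (simp add: payoff_bound_def wmax_nonneg pot_nonneg)

lemma transfer_payoff_bound_le:
  assumes "\<tau> \<in> Max_strats" "s \<in> V"
  shows "wmax * of_bool (s \<notin> T) + transfer \<tau> payoff_bound s \<le> payoff_bound s"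
proof -
  have "transfer \<tau> payoff_bound s = wmax * transfer \<tau> (\<lambda>u. pot (rank u)) s"
    unfolding payoff_bound_def[abs_def] by (rule transfer_scale)
  then show ?thesis
    using mult_left_mono[OF transfer_pot_rank[OF assms] wmax_nonneg]
    by (simp add: payoff_bound_def distrib_left)
qed

lemma bellman_payoff_bound_le:
  assumes "\<tau> \<in> Max_strats" "s \<in> V"
  shows "bellman \<tau> payoff_bound s \<le> payoff_bound s"
  using abs_bellman_zero_le[OF assms] transfer_payoff_bound_le[OF assms]
    bellman_eq_transfer[of \<tau> payoff_bound s]
  by linarith

lemma bellman_neg_payoff_bound_ge:
  assumes "\<tau> \<in> Max_strats" "s \<in> V"
  shows "- payoff_bound s \<le> bellman \<tau> (\<lambda>u. - payoff_bound u) s"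
proof -
  have "transfer \<tau> (\<lambda>u. - payoff_bound u) s = - transfer \<tau> payoff_bound s"
    by (simp add: transfer_def sum_negf)
  then show ?thesis
    using abs_bellman_zero_le[OF assms] transfer_payoff_bound_le[OF assms]
      bellman_eq_transfer[of \<tau> "\<lambda>u. - payoff_bound u" s]
    by linarith
qed

definition exp_payoff where
  "exp_payoff \<tau> s = lim (\<lambda>n. (bellman \<tau> ^^ n) (\<lambda>_. 0) s)"

lemma funpow_bellman_payoff_bound_decreasing:
  assumes \<tau>: "\<tau> \<in> Max_strats"
  shows "s \<in> V \<Longrightarrow> (bellman \<tau> ^^ Suc n) payoff_bound s \<le> (bellman \<tau> ^^ n) payoff_bound s"
proof (induction n arbitrary: s)
  case (Suc n)
  have "bellman \<tau> ((bellman \<tau> ^^ Suc n) payoff_bound) s \<le> bellman \<tau> ((bellman \<tau> ^^ n) payoff_bound) s"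
    using Suc.IH by (intro bellman_mono)
  then show ?case by simp
qed (simp add: bellman_payoff_bound_le[OF \<tau>])

lemma funpow_bellman_payoff_bound_le:
  assumes "\<tau> \<in> Max_strats" "s \<in> V"
  shows "(bellman \<tau> ^^ n) payoff_bound s \<le> payoff_bound s"
proof (induction n)
  case (Suc n)
  then show ?case
    using funpow_bellman_payoff_bound_decreasing[OF assms, of n] by linarith
qed simp

lemma funpow_bellman_payoff_bound_ge:
  assumes \<tau>: "\<tau> \<in> Max_strats" and s: "s \<in> V"
  shows "- payoff_bound s \<le> (bellman \<tau> ^^ n) payoff_bound s"
proof -
  have "- payoff_bound s \<le> (bellman \<tau> ^^ n) (\<lambda>u. - payoff_bound u) s"
    using s
  proof (induction n arbitrary: s)
    case (Suc n)
    have "bellman \<tau> (\<lambda>u. - payoff_bound u) s \<le> bellman \<tau> ((bellman \<tau> ^^ n) (\<lambda>u. - payoff_bound u)) s"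
      using Suc.IH by (intro bellman_mono)
    then show ?case
      using bellman_neg_payoff_bound_ge[OF \<tau> Suc.prems] by simp
  qed simp
  also have "\<dots> \<le> (bellman \<tau> ^^ n) payoff_bound s"
    using payoff_bound_nonneg s by (intro funpow_bellman_mono) (auto intro: order_trans[of _ 0])
  finally show ?thesis .
qed

lemma funpow_bellman_zero_tendsto:
  assumes \<tau>: "\<tau> \<in> Max_strats" and s: "s \<in> V"
  shows "(\<lambda>n. (bellman \<tau> ^^ n) (\<lambda>_. 0) s) \<longlonglongrightarrow> exp_payoff \<tau> s"
proof -
  have "decseq (\<lambda>n. (bellman \<tau> ^^ n) payoff_bound s)"
    using funpow_bellman_payoff_bound_decreasing[OF \<tau> s] by (simp add: decseq_Suc_iff)
  then obtain L where L: "(\<lambda>n. (bellman \<tau> ^^ n) payoff_bound s) \<longlonglongrightarrow> L"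
    using decseq_convergent funpow_bellman_payoff_bound_ge[OF \<tau> s] by blast
  have "(\<lambda>n. (bellman \<tau> ^^ n) payoff_bound s - (transfer \<tau> ^^ n) payoff_bound s) \<longlonglongrightarrow> L - 0"
    using payoff_bound_T by (intro tendsto_diff L funpow_transfer_tendsto_0[OF \<tau> _ s])
  then have "(\<lambda>n. (bellman \<tau> ^^ n) (\<lambda>_. 0) s) \<longlonglongrightarrow> L"
    by (simp add: funpow_bellman_eq_transfer[where x=payoff_bound])
  then show ?thesis
    by (simp add: exp_payoff_def limI)
qed

lemma funpow_bellman_tendsto:
  assumes "\<tau> \<in> Max_strats" "\<And>t. t \<in> T \<Longrightarrow> x t = 0" "s \<in> V"
  shows "(\<lambda>n. (bellman \<tau> ^^ n) x s) \<longlonglongrightarrow> exp_payoff \<tau> s"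
  using tendsto_add[OF funpow_bellman_zero_tendsto funpow_transfer_tendsto_0] assms
  by (simp add: funpow_bellman_eq_transfer[where x=x])

lemma exp_payoff_le_payoff_bound:
  "\<tau> \<in> Max_strats \<Longrightarrow> s \<in> V \<Longrightarrow> exp_payoff \<tau> s \<le> payoff_bound s"
  using funpow_bellman_tendsto payoff_bound_T funpow_bellman_payoff_bound_le
  by (blast intro: LIMSEQ_le_const2)

lemma bellman_exp_payoff:
  assumes \<tau>: "\<tau> \<in> Max_strats" and s: "s \<in> V"
  shows "bellman \<tau> (exp_payoff \<tau>) s = exp_payoff \<tau> s"
proof -
  have "(\<lambda>n. bellman \<tau> ((bellman \<tau> ^^ n) (\<lambda>_. 0)) s) \<longlonglongrightarrow> bellman \<tau> (exp_payoff \<tau>) s"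
  proof (cases "s \<in> T")
    case False
    have "(\<lambda>n. \<Sum>u\<in>V. pmf (step \<tau> s) u * (real_of_int (w s u) + (bellman \<tau> ^^ n) (\<lambda>_. 0) u))
        \<longlonglongrightarrow> (\<Sum>u\<in>V. pmf (step \<tau> s) u * (real_of_int (w s u) + exp_payoff \<tau> u))"
      by (intro tendsto_sum tendsto_mult tendsto_add tendsto_const funpow_bellman_zero_tendsto[OF \<tau>])
    then show ?thesis
      using False by (simp add: bellman_def)
  qed (simp add: bellman_def)
  moreover have "(\<lambda>n. bellman \<tau> ((bellman \<tau> ^^ n) (\<lambda>_. 0)) s) \<longlonglongrightarrow> exp_payoff \<tau> s"
    using LIMSEQ_Suc[OF funpow_bellman_zero_tendsto[OF \<tau> s]] by simp
  ultimately show ?thesis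
    by (rule LIMSEQ_unique)
qed

lemma exp_payoff_T: "\<tau> \<in> Max_strats \<Longrightarrow> t \<in> T \<Longrightarrow> exp_payoff \<tau> t = 0"
  using bellman_exp_payoff[of \<tau> t] by (simp add: bellman_def)

lemma bellman_le_exp_payoff:
  assumes \<tau>: "\<tau> \<in> Max_strats" and x_T: "\<And>t. t \<in> T \<Longrightarrow> x t = 0"
    and sub: "\<And>s. s \<in> V \<Longrightarrow> x s \<le> bellman \<tau> x s" and s: "s \<in> V"
  shows "bellman \<tau> x s \<le> exp_payoff \<tau> s"
proof -
  have "(bellman \<tau> ^^ n) x s' \<le> (bellman \<tau> ^^ Suc n) x s'" if "s' \<in> V" for n s'
    using that
  proof (induction n arbitrary: s')
    case (Suc n)
    have "bellman \<tau> ((bellman \<tau> ^^ n) x) s' \<le> bellman \<tau> ((bellman \<tau> ^^ Suc n) x) s'"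
      using Suc.IH by (intro bellman_mono)
    then show ?case by simp
  qed (simp add: sub)
  then have "incseq (\<lambda>n. (bellman \<tau> ^^ n) x s)"
    using s by (simp add: incseq_Suc_iff)
  from incseq_le[OF this funpow_bellman_tendsto[OF \<tau> x_T s], of 1] show ?thesis
    by simp
qed

lemma ETP_eq_exp_payoff:
  assumes "\<tau> \<in> Max_strats" "v \<in> V"
  shows "ETP VMax VMin T w \<rho> \<tau> v = ereal (exp_payoff \<tau> v)"
  using reach assms expectation_tp_paths[OF assms]
  by (simp add: ETP_def exp_payoff_def)

section \<open>The value of \<open>\<rho>\<close> against memoryless strategies of Max\<close>

abbreviation "val_rho \<equiv> val_m_rho VMax VMin T E w \<rho>"

definition val where
  "val v = real_of_ereal (val_rho v)"

lemma val_rho_eq_SUP: "v \<in> V \<Longrightarrow> val_rho v = (SUP \<tau>\<in>Max_strats. ereal (exp_payoff \<tau> v))"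
  unfolding val_m_rho_def using ETP_eq_exp_payoff by (intro SUP_cong) auto

lemma Max_strats_nonempty: "Max_strats \<noteq> {}"
proof -
  have "\<forall>s. \<exists>u. s \<in> VMax \<longrightarrow> (s, u) \<in> E"
    using ex_edge by blast
  then obtain nx where "\<And>s. s \<in> VMax \<Longrightarrow> (s, nx s) \<in> E"
    by metis
  then have "(\<lambda>s. return_pmf (nx s)) \<in> Max_strats"
    by (simp add: ml_strat_def)
  then show ?thesis by blast
qed

lemma val_rho_eq_val:
  assumes v: "v \<in> V"
  shows "val_rho v = ereal (val v)"
proof -
  obtain \<tau> where \<tau>: "\<tau> \<in> Max_strats"
    using Max_strats_nonempty by blast
  have "ereal (exp_payoff \<tau> v) \<le> val_rho v"
    unfolding val_rho_eq_SUP[OF v] using \<tau> by (intro SUP_upper) auto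
  moreover have "val_rho v \<le> ereal (payoff_bound v)"
    unfolding val_rho_eq_SUP[OF v] using exp_payoff_le_payoff_bound v by (intro SUP_least) auto
  ultimately have "\<bar>val_rho v\<bar> \<noteq> \<infinity>"
    by auto
  then show ?thesis
    by (simp add: val_def ereal_real)
qed

lemma exp_payoff_le_val:
  assumes "\<tau> \<in> Max_strats" "v \<in> V"
  shows "exp_payoff \<tau> v \<le> val v"
proof -
  have "ereal (exp_payoff \<tau> v) \<le> val_rho v"
    unfolding val_rho_eq_SUP[OF assms(2)] using assms(1) by (intro SUP_upper) auto
  then show ?thesis
    using val_rho_eq_val[OF assms(2)] by simp
qed

lemma ex_eps_optimal:
  assumes "v \<in> V" "0 < e"
  shows "\<exists>\<tau>\<in>Max_strats. val v - e < exp_payoff \<tau> v"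
proof (rule ccontr)
  assume "\<not> ?thesis"
  then have "val_rho v \<le> ereal (val v - e)"
    unfolding val_rho_eq_SUP[OF assms(1)] by (intro SUP_least) (auto simp: not_less)
  then show False
    using val_rho_eq_val[OF assms(1)] assms(2) by simp
qed

lemma exp_payoff_switch_ge:
  assumes \<tau>1: "\<tau>1 \<in> Max_strats" and \<tau>2: "\<tau>2 \<in> Max_strats"
    and s: "s \<in> V"
  defines "\<tau> \<equiv> \<lambda>s. if exp_payoff \<tau>2 s \<le> exp_payoff \<tau>1 s then \<tau>1 s else \<tau>2 s"
  shows "max (exp_payoff \<tau>1 s) (exp_payoff \<tau>2 s) \<le> exp_payoff \<tau> s"
proof -
  define x where "x s = max (exp_payoff \<tau>1 s) (exp_payoff \<tau>2 s)" for s
  define best where "best s = (if exp_payoff \<tau>2 s \<le> exp_payoff \<tau>1 s then \<tau>1 else \<tau>2)" for s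
  have best: "best s \<in> Max_strats" "x s = exp_payoff (best s) s" for s
    using \<tau>1 \<tau>2 by (auto simp: best_def x_def)
  have step_best: "step \<tau> s = step (best s) s" for s
    by (cases "s \<in> VMax") (auto simp: mc_step_def \<tau>_def best_def)
  have \<tau>: "\<tau> \<in> Max_strats"
    using \<tau>1 \<tau>2 by (auto simp: ml_strat_def \<tau>_def)
  have x_T: "x t = 0" if "t \<in> T" for t
    using exp_payoff_T[OF \<tau>1 that] exp_payoff_T[OF \<tau>2 that] by (simp add: x_def)
  have sub: "x s \<le> bellman \<tau> x s" if "s \<in> V" for s
  proof -
    have "x s = bellman (best s) (exp_payoff (best s)) s"
      using bellman_exp_payoff[OF best(1) that] best(2) by simp
    also have "\<dots> = bellman \<tau> (exp_payoff (best s)) s"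
      by (rule bellman_cong_step[OF step_best[symmetric]])
    also have "\<dots> \<le> bellman \<tau> x s"
      by (intro bellman_mono) (auto simp: x_def best_def)
    finally show ?thesis .
  qed
  have "x s \<le> exp_payoff \<tau> s"
    using sub[OF s] bellman_le_exp_payoff[OF \<tau> x_T sub s] by (rule order_trans)
  then show ?thesis
    by (simp add: x_def)
qed

lemma ex_uniformly_eps_optimal:
  assumes "0 < e"
  shows "\<exists>\<tau>\<in>Max_strats. \<forall>u\<in>V. val u - e < exp_payoff \<tau> u"
proof -
  have "\<exists>\<tau>\<in>Max_strats. \<forall>u\<in>U. val u - e < exp_payoff \<tau> u" if "finite U" "U \<subseteq> V" for U
    using that
  proof (induction U rule: finite_induct)
    case empty
    then show ?case using Max_strats_nonempty by auto
  next
    case (insert a U)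
    obtain \<tau>1 where \<tau>1: "\<tau>1 \<in> Max_strats" "\<forall>u\<in>U. val u - e < exp_payoff \<tau>1 u"
      using insert by auto
    obtain \<tau>2 where \<tau>2: "\<tau>2 \<in> Max_strats" "val a - e < exp_payoff \<tau>2 a"
      using ex_eps_optimal[OF _ assms, of a] insert.prems by auto
    define \<tau> where "\<tau> s = (if exp_payoff \<tau>2 s \<le> exp_payoff \<tau>1 s then \<tau>1 s else \<tau>2 s)" for s
    have "\<tau> \<in> Max_strats"
      using \<tau>1 \<tau>2 by (auto simp: ml_strat_def \<tau>_def)
    moreover have max_exp: "max (exp_payoff \<tau>1 u) (exp_payoff \<tau>2 u) \<le> exp_payoff \<tau> u" if "u \<in> V" for u
      unfolding \<tau>_def by (rule exp_payoff_switch_ge[OF \<tau>1(1) \<tau>2(1) that])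
    moreover have "val u - e < exp_payoff \<tau> u" if "u \<in> insert a U" for u
    proof -
      have "val u - e < max (exp_payoff \<tau>1 u) (exp_payoff \<tau>2 u)"
        using that \<tau>1(2) \<tau>2(2) by (auto simp: less_max_iff_disj)
      also have "\<dots> \<le> exp_payoff \<tau> u"
        using that insert.prems by (intro max_exp) blast
      finally show ?thesis .
    qed
    ultimately show ?case
      by blast
  qed
  from this[OF finite_V subset_refl] show ?thesis .
qed

lemma val_Max_ge:
  assumes v: "v \<in> VMax" and e: "(v, u) \<in> E"
  shows "real_of_int (w v u) + val u \<le> val v"
proof (rule field_le_epsilon)
  fix \<epsilon> :: real
  assume "0 < \<epsilon>"
  then obtain \<tau> where \<tau>: "\<tau> \<in> Max_strats" "\<forall>u\<in>V. val u - \<epsilon> < exp_payoff \<tau> u"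
    using ex_uniformly_eps_optimal by blast
  have vV: "v \<in> V" and uV: "u \<in> V"
    using v edge_in_V[OF e] by blast+
  have "real_of_int (w v u) + exp_payoff \<tau> u \<le> val v"
  proof (cases "real_of_int (w v u) + exp_payoff \<tau> u \<le> exp_payoff \<tau> v")
    case True
    then show ?thesis
      using exp_payoff_le_val[OF \<tau>(1) vV] by linarith
  next
    case False
    define \<tau>' where "\<tau>' = \<tau>(v := return_pmf u)"
    have \<tau>': "\<tau>' \<in> Max_strats"
      using \<tau>(1) e by (auto simp: \<tau>'_def ml_strat_def)
    have "v \<notin> T"
      using v disjoint by blast
    then have "bellman \<tau>' (exp_payoff \<tau>) v
        = (\<Sum>u'\<in>V. pmf (return_pmf u) u' * (real_of_int (w v u') + exp_payoff \<tau> u'))"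
      by (simp add: bellman_def step_Max[OF v] \<tau>'_def)
    also have "\<dots> = measure_pmf.expectation (return_pmf u) (\<lambda>u'. real_of_int (w v u') + exp_payoff \<tau> u')"
      using uV by (intro expectation_pmf_eq_sum[symmetric] finite_V) simp
    finally have at_v: "bellman \<tau>' (exp_payoff \<tau>) v = real_of_int (w v u) + exp_payoff \<tau> u"
      by simp
    have sub: "exp_payoff \<tau> s \<le> bellman \<tau>' (exp_payoff \<tau>) s" if "s \<in> V" for s
    proof (cases "s = v")
      case True
      then show ?thesis using False at_v by simp
    next
      case False
      then have "step \<tau>' s = step \<tau> s"
        by (simp add: mc_step_def \<tau>'_def)
      then have "bellman \<tau>' (exp_payoff \<tau>) s = bellman \<tau> (exp_payoff \<tau>) s"
        by (rule bellman_cong_step)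
      then show ?thesis
        using bellman_exp_payoff[OF \<tau>(1) that] by simp
    qed
    have "bellman \<tau>' (exp_payoff \<tau>) v \<le> exp_payoff \<tau>' v"
      by (rule bellman_le_exp_payoff[OF \<tau>' exp_payoff_T[OF \<tau>(1)] sub vV])
    then show ?thesis
      using at_v exp_payoff_le_val[OF \<tau>' vV] by simp
  qed
  moreover have "val u - \<epsilon> < exp_payoff \<tau> u"
    using \<tau>(2) uV by blast
  ultimately show "real_of_int (w v u) + val u \<le> val v + \<epsilon>"
    by linarith
qed

lemma val_Min_ge:
  assumes v: "v \<in> VMin"
  shows "(\<Sum>u\<in>V. pmf (\<rho> v) u * (real_of_int (w v u) + val u)) \<le> val v"
proof (rule field_le_epsilon)
  fix \<epsilon> :: real
  assume "0 < \<epsilon>"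
  then obtain \<tau> where \<tau>: "\<tau> \<in> Max_strats" "\<forall>u\<in>V. val u - \<epsilon> < exp_payoff \<tau> u"
    using ex_uniformly_eps_optimal by blast
  have vV: "v \<in> V"
    using v by blast
  have "(\<Sum>u\<in>V. pmf (\<rho> v) u * (real_of_int (w v u) + val u))
      \<le> (\<Sum>u\<in>V. pmf (\<rho> v) u * (real_of_int (w v u) + exp_payoff \<tau> u + \<epsilon>))"
  proof (intro sum_mono mult_left_mono)
    fix u assume "u \<in> V"
    then have "val u - \<epsilon> < exp_payoff \<tau> u"
      using \<tau>(2) by blast
    then show "real_of_int (w v u) + val u \<le> real_of_int (w v u) + exp_payoff \<tau> u + \<epsilon>"
      by linarith
  qed simp
  also have "\<dots> = bellman \<tau> (exp_payoff \<tau>) v + \<epsilon>"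
    using v disjoint sum_pmf_rho[OF v]
    by (auto simp: bellman_def step_Min distrib_left sum.distrib sum_distrib_right[symmetric])
  also have "\<dots> \<le> val v + \<epsilon>"
    using bellman_exp_payoff[OF \<tau>(1) vV] exp_payoff_le_val[OF \<tau>(1) vV] by simp
  finally show "(\<Sum>u\<in>V. pmf (\<rho> v) u * (real_of_int (w v u) + val u)) \<le> val v + \<epsilon>" .
qed

lemma Etil_eq:
  assumes "v \<in> VMin"
  shows "Etil VMax VMin T E w \<rho> v = {u \<in> set_pmf (\<rho> v). \<forall>u'\<in>set_pmf (\<rho> v).
           real_of_int (w v u) + val u \<le> real_of_int (w v u') + val u'}"
proof -
  have "val_rho u = ereal (val u)" if "u \<in> set_pmf (\<rho> v)" for u
    using set_rho_subset_V[OF assms] that val_rho_eq_val by blast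
  then show ?thesis
    by (auto simp: Etil_def)
qed

section \<open>Cycles conforming to \<open>\<sigma>1\<close>\<close>

lemma Gtil_edge_val_le:
  assumes "(v, u) \<in> Gtil_edges VMax VMin T E w \<rho>"
  shows "real_of_int (w v u) + val u \<le> val v"
proof (cases "v \<in> VMin")
  case True
  then have "u \<in> Etil VMax VMin T E w \<rho> v"
    using assms by (simp add: Gtil_edges_def)
  then have "real_of_int (w v u) + val u \<le> (\<Sum>u'\<in>V. pmf (\<rho> v) u' * (real_of_int (w v u') + val u'))"
    using True set_rho_subset_V finite_V
    by (intro pmf_weighted_sum_ge_lower_bound) (auto simp: Etil_eq)
  then show ?thesis
    using val_Min_ge[OF True] by linarith
next
  case False
  then have "v \<in> VMax" "(v, u) \<in> E"
    using assms edge_in_V by (auto simp: Gtil_edges_def)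
  then show ?thesis
    by (rule val_Max_ge)
qed

lemma Gtil_tight_edge_rank_less:
  assumes \<sigma>1: "\<forall>v \<in> VMin. \<sigma>1 v \<in> Etil VMax VMin T E w \<rho> v \<and>
                  (\<forall>u \<in> Etil VMax VMin T E w \<rho> v. adist (\<sigma>1 v) \<le> adist u)"
    and edge: "(v, u) \<in> Gtil_edges VMax VMin T E w \<rho>"
    and conf: "v \<in> VMin \<Longrightarrow> u = \<sigma>1 v"
    and tight: "real_of_int (w v u) + val u = val v"
  shows "rank u < rank v"
proof -
  have vu: "(v, u) \<in> E"
    using edge by (simp add: Gtil_edges_def)
  show ?thesis
  proof (cases "v \<in> VMin")
    case True
    let ?m = "real_of_int (w v u) + val u"
    have "u \<in> Etil VMax VMin T E w \<rho> v"
      using \<sigma>1 True conf by simp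
    then have min: "?m \<le> real_of_int (w v u') + val u'" if "u' \<in> set_pmf (\<rho> v)" for u'
      using that by (simp add: Etil_eq[OF True])
    have "u' \<in> Etil VMax VMin T E w \<rho> v" if "u' \<in> set_pmf (\<rho> v)" for u'
    proof -
      have "real_of_int (w v u') + val u' = ?m"
        using pmf_weighted_sum_le_lower_bound_imp_eq[OF set_rho_subset_V[OF True] finite_V min]
          val_Min_ge[OF True] tight that by simp
      then show ?thesis
        using min that by (simp add: Etil_eq[OF True])
    qed
    then have "adist u \<le> adist u'" if "u' \<in> set_pmf (\<rho> v)" for u'
      using \<sigma>1 True conf that by blast
    moreover have "u \<in> V"
      using edge_in_V[OF vu] by blast
    ultimately have "rank u \<le> rank u'" if "u' \<in> set_pmf (\<rho> v)" for u'
      using that set_rho_subset_V[OF True] adist_eq_rank by (metis enat_ord_simps(1) subsetD)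
    then have "rank u \<le> Min (rank ` set_pmf (\<rho> v))"
      using finite_set_rho[OF True] by (simp add: set_pmf_not_empty)
    then show ?thesis
      using rank_Min[OF True] by simp
  next
    case False
    then have "v \<in> VMax"
      using edge_in_V[OF vu] by blast
    then show ?thesis
      using vu by (rule rank_Max)
  qed
qed

lemma conf_cycle_weight_neg:
  assumes \<sigma>1: "\<forall>v \<in> VMin. \<sigma>1 v \<in> Etil VMax VMin T E w \<rho> v \<and>
                  (\<forall>u \<in> Etil VMax VMin T E w \<rho> v. adist (\<sigma>1 v) \<le> adist u)"
    and c: "conf_cycle (Gtil_edges VMax VMin T E w \<rho>) VMin \<sigma>1 c"
  shows "cycle_weight w c < 0"
proof (rule ccontr)
  assume "\<not> cycle_weight w c < 0"
  then have nonneg: "0 \<le> cycle_weight w c"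
    by simp
  define nx where "nx i = c ! (Suc i mod length c)" for i
  have c_ne: "c \<noteq> []"
    and edge: "\<And>i. i < length c \<Longrightarrow> (c ! i, nx i) \<in> Gtil_edges VMax VMin T E w \<rho>"
    and conf: "\<And>i. i < length c \<Longrightarrow> c ! i \<in> VMin \<Longrightarrow> nx i = \<sigma>1 (c ! i)"
    using c by (auto simp: conf_cycle_def nx_def)
  have "real_of_int (w (c ! i) (nx i)) + val (nx i) = val (c ! i)" if "i < length c" for i
    using cycle_weight_nonneg_imp_tight[OF c_ne Gtil_edge_val_le[OF edge[unfolded nx_def]] nonneg that]
    by (simp add: nx_def)
  then have "rank (nx i) < rank (c ! i)" if "i < length c" for i
    using Gtil_tight_edge_rank_less[OF \<sigma>1 edge[OF that] conf[OF that]] that by blast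
  then show False
    using cycle_not_strictly_decreasing[OF c_ne, of rank] by (simp add: nx_def)
qed

end

theorem lemma22:
  fixes VMax VMin T :: "'v set" and E :: "('v \<times> 'v) set" and w :: "'v \<Rightarrow> 'v \<Rightarrow> int"
    and \<rho> :: "'v \<Rightarrow> 'v pmf" and \<sigma>1 :: "'v \<Rightarrow> 'v"
  assumes game: "spg VMax VMin T E"
    and vald: "\<forall>v \<in> VMax \<union> VMin \<union> T. val_d VMax VMin T E w v \<noteq> \<infinity>"
    and valm: "\<forall>v \<in> VMax \<union> VMin \<union> T. val_m_bar VMax VMin T E w v \<noteq> \<infinity>"
    and rho: "ml_strat E VMin \<rho>"
    and reach: "\<forall>v \<in> VMax \<union> VMin \<union> T. \<forall>\<tau>. ml_strat E VMax \<tau> \<longrightarrow>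
                  reach_prob VMax VMin T \<rho> \<tau> v = 1"
    and sigma1: "\<forall>v \<in> VMin. \<sigma>1 v \<in> Etil VMax VMin T E w \<rho> v \<and>
                  (\<forall>u \<in> Etil VMax VMin T E w \<rho> v.
                     attr_dist VMax VMin T E \<rho> (\<sigma>1 v) \<le> attr_dist VMax VMin T E \<rho> u)"
  shows "\<forall>c. conf_cycle (Gtil_edges VMax VMin T E w \<rho>) VMin \<sigma>1 c \<longrightarrow> cycle_weight w c < 0"
proof -
  interpret reaching_min_strategy VMax VMin T E w \<rho>
    using game rho reach by unfold_locales
  show ?thesis
    using conf_cycle_weight_neg[OF sigma1] by blast
qed

end
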